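(* Let $\Gamma$ be a finite set equipped with a product probability measure on $2^\Gamma$. Let $\{B_{ij}\}$ be a finite family of increasing events indexed by pairs $(i,j)$, and set $B_i=\bigcup_j B_{ij}$. Write $(i,j)\sim(k,l)$ if $B_{ij}$ and $B_{kl}$ are not independent; by convention $(i,j)\sim(i,j)$. Let $I_{ij},I_i$ be the indicators of $B_{ij},B_i$. Set \[ X=\sum_i I_i,\qquad \mu=\sum_{i,j}\mathbb E I_{ij}, \] \[ \bar\Theta=\sum_{i,j}\sum_k\Pr\Big(B_{ij}\cap\bigcup_l\{B_{kl}:(k,l)\sim(i,j)\}\Big), \] \[ \bar\Delta=\sum\sum\{\mathbb E I_{ij}I_{kl}:(i,j)\sim(k,l)\}, \] \[ \gamma=\sum_i\sum_{\{j,k\}}\mathbb E I_{ij}I_{ik}, \] where the last inner sum is over unordered pairs $\{j,k\}$ with $j\ne k$. Assume $\mu>0$. Then for every $t\in[\gamma,\mu]$, \[ \Pr(X\le\mu-t)\le\exp\Big[-\frac{(t-\gamma)^2}{2\bar\Theta}\Big]\le\exp\Big[-\frac{(t-\gamma)^2}{2\bar\Delta}\Big]. \]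
   Context: An event $B\subseteq 2^\Gamma$ is increasing if $A\in B$ and $A\subseteq A'$ imply $A'\in B$. *)

theory Defs
  imports Complex_Main
begin

definition wt :: "'a set \<Rightarrow> ('a \<Rightarrow> real) \<Rightarrow> 'a set \<Rightarrow> real" where
  "wt Gamma p S = (\<Prod>x\<in>S. p x) * (\<Prod>x\<in>Gamma - S. 1 - p x)"

definition Pr :: "'a set \<Rightarrow> ('a \<Rightarrow> real) \<Rightarrow> 'a set set \<Rightarrow> real" where
  "Pr Gamma p A = (\<Sum>S\<in>A \<inter> Pow Gamma. wt Gamma p S)"

definition increasing_event :: "'a set \<Rightarrow> 'a set set \<Rightarrow> bool" where
  "increasing_event Gamma B \<longleftrightarrow> B \<subseteq> Pow Gamma \<and>
     (\<forall>A A'. A \<in> B \<longrightarrow> A \<subseteq> A' \<longrightarrow> A' \<subseteq> Gamma \<longrightarrow> A' \<in> B)"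

definition indep_ev :: "'a set \<Rightarrow> ('a \<Rightarrow> real) \<Rightarrow> 'a set set \<Rightarrow> 'a set set \<Rightarrow> bool" where
  "indep_ev Gamma p A B \<longleftrightarrow> Pr Gamma p (A \<inter> B) = Pr Gamma p A * Pr Gamma p B"

definition dep :: "'a set \<Rightarrow> ('a \<Rightarrow> real) \<Rightarrow> ('i \<times> 'j \<Rightarrow> 'a set set) \<Rightarrow> 'i \<times> 'j \<Rightarrow> 'i \<times> 'j \<Rightarrow> bool" where
  "dep Gamma p B a b \<longleftrightarrow> a = b \<or> \<not> indep_ev Gamma p (B a) (B b)"

end

theory Submission
  imports Defs "HOL-Library.Indicator_Function"
begin

text \<open>Let Psi l = E exp (-l X). By the Bonferroni bound
  I_i \<ge> \<Sum>_j I_ij - \<Sum>_{j<k} I_ij I_ik it suffices to bound E (I_ij exp (-l X)) from below.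
  Split X into the part built from events dependent on B_ij and the rest. The rest is independent
  of B_ij, because in a product space an increasing event that is independent of each member of a
  family of increasing events is independent of the whole family; the dependent part is handled by
  1 - y \<le> exp (-y) and Harris' inequality. This gives the differential inequality
  -Psi' l \<ge> Psi l (\<mu> - \<gamma> - l Theta), hence Psi l \<le> exp (-l (\<mu> - \<gamma>) + l^2 Theta / 2),
  and Markov's inequality for exp (-l X) with l = (t - \<gamma>) / Theta yields the bound.\<close>

definition expect :: "'a set \<Rightarrow> ('a \<Rightarrow> real) \<Rightarrow> ('a set \<Rightarrow> real) \<Rightarrow> real" where
  "expect G p f = (\<Sum>S\<in>Pow G. wt G p S * f S)"

definition prob_params :: "'a set \<Rightarrow> ('a \<Rightarrow> real) \<Rightarrow> bool" where
  "prob_params G p \<longleftrightarrow> (\<forall>x\<in>G. 0 \<le> p x \<and> p x \<le> 1)"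

lemma prob_params_insert: "prob_params (insert x G) p \<longleftrightarrow> prob_params G p \<and> 0 \<le> p x \<and> p x \<le> 1"
  unfolding prob_params_def by auto

lemma wt_nonneg: "prob_params G p \<Longrightarrow> S \<subseteq> G \<Longrightarrow> 0 \<le> wt G p S"
  unfolding wt_def prob_params_def
  by (intro mult_nonneg_nonneg prod_nonneg) (auto dest: subsetD)

lemma wt_insert:
  assumes "finite G" "x \<notin> G" "S \<subseteq> G"
  shows "wt (insert x G) p (insert x S) = p x * wt G p S"
    and "wt (insert x G) p S = (1 - p x) * wt G p S"
proof -
  have "finite S" "x \<notin> S" using assms finite_subset by blast+
  moreover have "insert x G - insert x S = G - S" "insert x G - S = insert x (G - S)"
    using assms by blast+
  ultimately show "wt (insert x G) p (insert x S) = p x * wt G p S"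
    and "wt (insert x G) p S = (1 - p x) * wt G p S"
    unfolding wt_def using assms by simp_all
qed

lemma expect_insert:
  assumes "finite G" "x \<notin> G"
  shows "expect (insert x G) p f = p x * expect G p (\<lambda>T. f (insert x T)) + (1 - p x) * expect G p f"
proof -
  have inj: "inj_on (insert x) (Pow G)"
    using assms unfolding inj_on_def by (metis PowD insert_ident subsetD)
  have "Pow G \<inter> insert x ` Pow G = {}" using assms by blast
  then have "expect (insert x G) p f = (\<Sum>S\<in>Pow G. wt (insert x G) p S * f S)
      + (\<Sum>S\<in>insert x ` Pow G. wt (insert x G) p S * f S)"
    unfolding expect_def Pow_insert using assms by (simp add: sum.union_disjoint)
  also have "(\<Sum>S\<in>insert x ` Pow G. wt (insert x G) p S * f S)
      = (\<Sum>S\<in>Pow G. wt (insert x G) p (insert x S) * f (insert x S))"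
    using inj by (simp add: sum.reindex)
  also have "\<dots> = p x * expect G p (\<lambda>T. f (insert x T))"
    unfolding expect_def sum_distrib_left using wt_insert(1)[OF assms] by (auto intro!: sum.cong)
  also have "(\<Sum>S\<in>Pow G. wt (insert x G) p S * f S) = (1 - p x) * expect G p f"
    unfolding expect_def sum_distrib_left using wt_insert(2)[OF assms] by (auto intro!: sum.cong)
  finally show ?thesis by simp
qed

lemma expect_const: "finite G \<Longrightarrow> expect G p (\<lambda>_. c) = c"
proof (induction G rule: finite_induct)
  case empty
  then show ?case by (simp add: expect_def wt_def)
next
  case (insert x G)
  then show ?case by (simp add: expect_insert algebra_simps)
qed

lemma expect_diff: "expect G p (\<lambda>S. f S - g S) = expect G p f - expect G p g"
  unfolding expect_def by (simp add: right_diff_distrib sum_subtractf)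

lemma expect_cmult: "expect G p (\<lambda>S. c * f S) = c * expect G p f"
  unfolding expect_def sum_distrib_left by (simp add: mult.left_commute)

lemma expect_sum: "expect G p (\<lambda>S. \<Sum>i\<in>I. f i S) = (\<Sum>i\<in>I. expect G p (f i))"
  unfolding expect_def by (simp add: sum_distrib_left sum.swap[of _ I])

lemma expect_mono:
  "prob_params G p \<Longrightarrow> (\<And>S. S \<subseteq> G \<Longrightarrow> f S \<le> g S) \<Longrightarrow> expect G p f \<le> expect G p g"
  unfolding expect_def by (auto intro!: sum_mono mult_left_mono wt_nonneg)

lemma expect_nonneg:
  "prob_params G p \<Longrightarrow> (\<And>S. S \<subseteq> G \<Longrightarrow> 0 \<le> f S) \<Longrightarrow> 0 \<le> expect G p f"
  using expect_mono[of G p "\<lambda>_. 0" f] by (simp add: expect_def)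

lemma Pr_eq_expect: "finite G \<Longrightarrow> Pr G p A = expect G p (indicator A)"
  unfolding Pr_def expect_def Int_commute[of A]
  by (simp add: sum.inter_restrict indicator_def of_bool_def if_distrib cong: if_cong)

lemma monotone_on_Pow_insert:
  assumes "monotone_on (Pow (insert x G)) (\<le>) ord f"
  shows "monotone_on (Pow G) (\<le>) ord (\<lambda>T. f (insert x T))"
    and "monotone_on (Pow G) (\<le>) ord f"
    and "S \<subseteq> G \<Longrightarrow> ord (f S) (f (insert x S))"
proof -
  have "Pow G \<subseteq> Pow (insert x G)" "insert x ` Pow G \<subseteq> Pow (insert x G)" by auto
  then show "monotone_on (Pow G) (\<le>) ord (\<lambda>T. f (insert x T))" "monotone_on (Pow G) (\<le>) ord f"
    using assms unfolding monotone_on_def by (simp_all add: insert_mono subset_insertI2)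
  show "S \<subseteq> G \<Longrightarrow> ord (f S) (f (insert x S))"
    using assms unfolding monotone_on_def by blast
qed

lemma mixture_product_eq:
  "(q * a1 + (1 - q) * a0) * (q * b1 + (1 - q) * b0)
     = q * (a1 * b1) + (1 - q) * (a0 * b0) - q * (1 - q) * ((a1 - a0) * (b1 - b0))"
  for q :: real
  by (simp add: algebra_simps)

theorem harris_inequality:
  assumes "finite G" "prob_params G p" "mono_on (Pow G) f" "antimono_on (Pow G) g"
  shows "expect G p (\<lambda>S. f S * g S) \<le> expect G p f * expect G p g"
  using assms
proof (induction G arbitrary: f g rule: finite_induct)
  case empty
  then show ?case by (simp add: expect_def wt_def)
next
  case (insert x G)
  define q where "q = p x"
  have probs: "prob_params G p" and q: "0 \<le> q" "q \<le> 1"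
    using insert.prems(1) unfolding q_def prob_params_insert by auto
  note f_sect = monotone_on_Pow_insert[OF insert.prems(2)]
  note g_sect = monotone_on_Pow_insert[OF insert.prems(3)]
  define a1 a0 b1 b0 where "a1 = expect G p (\<lambda>T. f (insert x T))" and "a0 = expect G p f"
    and "b1 = expect G p (\<lambda>T. g (insert x T))" and "b0 = expect G p g"
  have "a0 \<le> a1" "b1 \<le> b0"
    unfolding a0_def a1_def b0_def b1_def using f_sect(3) g_sect(3) by (auto intro!: expect_mono probs)
  then have cross: "0 \<le> q * (1 - q) * ((a1 - a0) * (b0 - b1))"
    using q by simp
  have "expect (insert x G) p (\<lambda>S. f S * g S)
      = q * expect G p (\<lambda>T. f (insert x T) * g (insert x T)) + (1 - q) * expect G p (\<lambda>T. f T * g T)"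
    unfolding q_def using expect_insert[OF insert.hyps] .
  also have "\<dots> \<le> q * (a1 * b1) + (1 - q) * (a0 * b0)"
    using insert.IH[OF probs f_sect(1) g_sect(1)] insert.IH[OF probs f_sect(2) g_sect(2)] q
    unfolding a1_def a0_def b1_def b0_def by (intro add_mono mult_left_mono) auto
  also have "\<dots> \<le> (q * a1 + (1 - q) * a0) * (q * b1 + (1 - q) * b0)"
    using cross unfolding mixture_product_eq by (simp add: algebra_simps)
  also have "\<dots> = expect (insert x G) p f * expect (insert x G) p g"
    unfolding a1_def a0_def b1_def b0_def q_def expect_insert[OF insert.hyps] ..
  finally show ?case .
qed

definition upward_closed :: "'a set \<Rightarrow> 'a set set \<Rightarrow> bool" where
  "upward_closed G A \<longleftrightarrow> (\<forall>S T. S \<in> A \<longrightarrow> S \<subseteq> T \<longrightarrow> T \<subseteq> G \<longrightarrow> T \<in> A)"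

definition slice :: "'a \<Rightarrow> 'a set set \<Rightarrow> 'a set set" where
  "slice x A = {T. insert x T \<in> A}"

lemma upward_closed_increasing_event: "increasing_event G A \<Longrightarrow> upward_closed G A"
  unfolding increasing_event_def upward_closed_def by blast

lemma mono_on_indicator: "upward_closed G A \<Longrightarrow> mono_on (Pow G) (indicator A :: _ \<Rightarrow> real)"
  unfolding upward_closed_def monotone_on_def indicator_def by auto

lemma upward_closed_UN: "(\<And>x. x \<in> K \<Longrightarrow> upward_closed G (F x)) \<Longrightarrow> upward_closed G (\<Union>x\<in>K. F x)"
  unfolding upward_closed_def by blast

lemma upward_closed_INT: "(\<And>x. x \<in> K \<Longrightarrow> upward_closed G (F x)) \<Longrightarrow> upward_closed G (\<Inter>x\<in>K. F x)"
  unfolding upward_closed_def by blast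

lemma upward_closed_slice:
  assumes "upward_closed (insert x G) A"
  shows "upward_closed G (slice x A)" and "upward_closed G A"
    and "S \<subseteq> G \<Longrightarrow> S \<in> A \<Longrightarrow> S \<in> slice x A"
proof -
  show "upward_closed G (slice x A)" "upward_closed G A"
    using assms unfolding upward_closed_def slice_def by (simp_all add: insert_mono subset_insertI2)
  show "S \<subseteq> G \<Longrightarrow> S \<in> A \<Longrightarrow> S \<in> slice x A"
    using assms unfolding upward_closed_def slice_def by (meson insert_mono subset_insertI mem_Collect_eq)
qed

lemma Pr_insert:
  assumes "finite G" "x \<notin> G"
  shows "Pr (insert x G) p A = p x * Pr G p (slice x A) + (1 - p x) * Pr G p A"
  using assms by (simp add: Pr_eq_expect expect_insert indicator_def[abs_def] slice_def)

lemma Pr_mono: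
  "finite G \<Longrightarrow> prob_params G p \<Longrightarrow> (\<And>S. S \<subseteq> G \<Longrightarrow> S \<in> A \<Longrightarrow> S \<in> A')
    \<Longrightarrow> Pr G p A \<le> Pr G p A'"
  unfolding Pr_eq_expect by (rule expect_mono) (auto simp: indicator_def)

lemma Pr_nonneg: "finite G \<Longrightarrow> prob_params G p \<Longrightarrow> 0 \<le> Pr G p A"
  unfolding Pr_eq_expect by (rule expect_nonneg) auto

lemma Pr_UN_le:
  assumes "finite G" "prob_params G p" "finite I"
  shows "Pr G p (\<Union>i\<in>I. A i) \<le> (\<Sum>i\<in>I. Pr G p (A i))"
proof -
  have "indicator (\<Union>i\<in>I. A i) S \<le> (\<Sum>i\<in>I. indicator (A i) S :: real)" for S
  proof (cases "S \<in> (\<Union>i\<in>I. A i)")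
    case True
    then obtain i where "i \<in> I" "S \<in> A i" by blast
    then show ?thesis
      using member_le_sum[of i I "\<lambda>i. indicator (A i) S :: real"] assms(3) True by simp
  qed (simp add: sum_nonneg)
  then show ?thesis
    unfolding Pr_eq_expect[OF assms(1)] expect_sum[symmetric] by (intro expect_mono assms(2))
qed

lemma harris_inequality_events:
  assumes "finite G" "prob_params G p" "upward_closed G A" "upward_closed G C"
  shows "Pr G p A * Pr G p C \<le> Pr G p (A \<inter> C)"
proof -
  have "antimono_on (Pow G) (\<lambda>S. - indicator C S :: real)"
    using mono_on_indicator[OF assms(4)] unfolding monotone_on_def by auto
  from harris_inequality[OF assms(1,2) mono_on_indicator[OF assms(3)] this]
  show ?thesis
    unfolding Pr_eq_expect[OF assms(1)] indicator_inter_arith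
    using expect_cmult[of G p "-1"] by simp
qed

lemma slice_Int: "slice x (A \<inter> C) = slice x A \<inter> slice x C"
  unfolding slice_def by auto

text \<open>In the decomposition along x, independence in the larger space is a sum of three
  nonnegative defects (two Harris defects and the covariance of the slice jumps), so all vanish.\<close>

lemma indep_ev_insert_split:
  assumes fin: "finite G" and x: "x \<notin> G" and probs: "prob_params (insert x G) p"
    and A: "upward_closed (insert x G) A" and C: "upward_closed (insert x G) C"
    and indep: "indep_ev (insert x G) p A C"
  shows "p x \<noteq> 0 \<Longrightarrow> indep_ev G p (slice x A) (slice x C)"
    and "p x \<noteq> 1 \<Longrightarrow> indep_ev G p A C"
    and "p x \<noteq> 0 \<Longrightarrow> p x \<noteq> 1 \<Longrightarrow> Pr G p (slice x A) = Pr G p A \<or> Pr G p (slice x C) = Pr G p C"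
proof -
  define q where "q = p x"
  have probs': "prob_params G p" and q: "0 \<le> q" "q \<le> 1"
    using probs unfolding q_def prob_params_insert by auto
  define a1 a0 c1 c0 where "a1 = Pr G p (slice x A)" and "a0 = Pr G p A"
    and "c1 = Pr G p (slice x C)" and "c0 = Pr G p C"
  define X1 X0 where "X1 = Pr G p (slice x A \<inter> slice x C)" and "X0 = Pr G p (A \<inter> C)"
  have "a1 * c1 \<le> X1" "a0 * c0 \<le> X0"
    unfolding a1_def c1_def X1_def a0_def c0_def X0_def
    using upward_closed_slice[OF A] upward_closed_slice[OF C]
    by (auto intro!: harris_inequality_events fin probs')
  then have defect1: "0 \<le> q * (X1 - a1 * c1)" and defect0: "0 \<le> (1 - q) * (X0 - a0 * c0)"
    using q by simp_all
  have "a0 \<le> a1" "c0 \<le> c1"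
    unfolding a0_def a1_def c0_def c1_def
    using upward_closed_slice(3)[OF A] upward_closed_slice(3)[OF C] by (auto intro!: Pr_mono fin probs')
  then have cross: "0 \<le> q * (1 - q) * ((a1 - a0) * (c1 - c0))"
    using q by simp
  have "q * X1 + (1 - q) * X0 = (q * a1 + (1 - q) * a0) * (q * c1 + (1 - q) * c0)"
    using indep unfolding indep_ev_def Pr_insert[OF fin x] slice_Int q_def
      a1_def a0_def c1_def c0_def X1_def X0_def .
  then have "q * (X1 - a1 * c1) + (1 - q) * (X0 - a0 * c0) + q * (1 - q) * ((a1 - a0) * (c1 - c0)) = 0"
    unfolding mixture_product_eq by (simp add: algebra_simps)
  then have "q * (X1 - a1 * c1) = 0" "(1 - q) * (X0 - a0 * c0) = 0"
    "q * (1 - q) * ((a1 - a0) * (c1 - c0)) = 0"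
    using defect1 defect0 cross by linarith+
  then show "p x \<noteq> 0 \<Longrightarrow> indep_ev G p (slice x A) (slice x C)"
    and "p x \<noteq> 1 \<Longrightarrow> indep_ev G p A C"
    and "p x \<noteq> 0 \<Longrightarrow> p x \<noteq> 1 \<Longrightarrow> Pr G p (slice x A) = Pr G p A \<or> Pr G p (slice x C) = Pr G p C"
    unfolding indep_ev_def q_def a1_def a0_def c1_def c0_def X1_def X0_def slice_Int by auto
qed

lemma eq_at_positive_weight_if_expect_eq:
  assumes "finite G" "prob_params G p" "\<And>S. S \<subseteq> G \<Longrightarrow> f S \<le> g S"
    and "expect G p f = expect G p g" and "T \<subseteq> G" and "wt G p T \<noteq> 0"
  shows "f T = g T"
proof -
  have "(\<Sum>S\<in>Pow G. wt G p S * (g S - f S)) = 0"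
    using assms(4) expect_diff[of G p g f] unfolding expect_def by simp
  moreover have "\<forall>S\<in>Pow G. 0 \<le> wt G p S * (g S - f S)"
    using assms(2,3) by (simp add: wt_nonneg)
  ultimately have "\<forall>S\<in>Pow G. wt G p S * (g S - f S) = 0"
    using assms(1) sum_nonneg_eq_0_iff[of "Pow G" "\<lambda>S. wt G p S * (g S - f S)"] by auto
  then have "wt G p T * (g T - f T) = 0" using assms(5) by auto
  then show ?thesis using assms(6) by simp
qed

lemma expect_family_cong:
  assumes fin: "finite G" and probs: "prob_params G p"
    and sub: "\<And>b S. S \<subseteq> G \<Longrightarrow> S \<in> F b \<Longrightarrow> S \<in> F' b"
    and eq: "\<And>b. Pr G p (F' b) = Pr G p (F b)"
  shows "expect G p (\<lambda>S. h (\<lambda>b. S \<in> F' b)) = expect G p (\<lambda>S. h (\<lambda>b. S \<in> F b))"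
  unfolding expect_def
proof (rule sum.cong[OF refl])
  fix T assume T: "T \<in> Pow G"
  have "T \<in> F' b \<longleftrightarrow> T \<in> F b" if "wt G p T \<noteq> 0" for b
  proof -
    have "indicator (F b) S \<le> (indicator (F' b) S :: real)" if "S \<subseteq> G" for S
      using sub[OF that] by (simp add: indicator_def)
    from eq_at_positive_weight_if_expect_eq[of G p "indicator (F b)" "indicator (F' b)" T]
      fin probs this eq[of b] T \<open>wt G p T \<noteq> 0\<close>
    have "indicator (F b) T = (indicator (F' b) T :: real)"
      by (simp add: Pr_eq_expect[OF fin])
    then show ?thesis by (auto simp: indicator_def)
  qed
  then show "wt G p T * h (\<lambda>b. T \<in> F' b) = wt G p T * h (\<lambda>b. T \<in> F b)"
    by (cases "wt G p T = 0") auto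
qed

theorem indep_ev_upward_family:
  assumes "finite G" "prob_params G p" "upward_closed G A" "\<And>b. upward_closed G (F b)"
    and "\<And>b. indep_ev G p A (F b)"
  shows "expect G p (\<lambda>S. indicator A S * h (\<lambda>b. S \<in> F b))
       = Pr G p A * expect G p (\<lambda>S. h (\<lambda>b. S \<in> F b))"
  using assms
proof (induction G arbitrary: A F rule: finite_induct)
  case empty
  then show ?case by (cases "{} \<in> A") (simp_all add: expect_def Pr_def wt_def)
next
  case (insert x G)
  define q where "q = p x"
  have probs: "prob_params G p" using insert.prems(1) by (simp add: prob_params_insert)
  define F1 where "F1 b = slice x (F b)" for b
  note split = indep_ev_insert_split[OF insert.hyps insert.prems(1,2,3) insert.prems(4)]
  define a1 a0 where "a1 = Pr G p (slice x A)" and "a0 = Pr G p A"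
  define g1 g0 where "g1 = expect G p (\<lambda>S. h (\<lambda>b. S \<in> F1 b))"
    and "g0 = expect G p (\<lambda>S. h (\<lambda>b. S \<in> F b))"
  have upward_F1: "upward_closed G (F1 b)" and upward_F: "upward_closed G (F b)" for b
    unfolding F1_def using upward_closed_slice[OF insert.prems(3)] by auto
  have IH1: "q \<noteq> 0 \<Longrightarrow> expect G p (\<lambda>S. indicator (slice x A) S * h (\<lambda>b. S \<in> F1 b)) = a1 * g1"
    unfolding a1_def g1_def q_def F1_def
    using upward_closed_slice(1)[OF insert.prems(2)] upward_F1 split(1)
    by (intro insert.IH probs) (auto simp: F1_def)
  have IH0: "q \<noteq> 1 \<Longrightarrow> expect G p (\<lambda>S. indicator A S * h (\<lambda>b. S \<in> F b)) = a0 * g0"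
    unfolding a0_def g0_def q_def
    using upward_closed_slice(2)[OF insert.prems(2)] upward_F split(2)
    by (intro insert.IH probs) auto
  have cross: "g1 = g0" if "q \<noteq> 0" "q \<noteq> 1" "a1 \<noteq> a0"
  proof -
    have "Pr G p (F1 b) = Pr G p (F b)" for b
      using split(3)[of b] that unfolding a1_def a0_def F1_def q_def by auto
    then show "g1 = g0"
      unfolding g1_def g0_def using upward_closed_slice(3)[OF insert.prems(3)]
      by (intro expect_family_cong insert.hyps probs) (auto simp: F1_def)
  qed
  have "q * expect G p (\<lambda>S. indicator (slice x A) S * h (\<lambda>b. S \<in> F1 b)) = q * (a1 * g1)"
    using IH1 by (cases "q = 0") auto
  moreover have "(1 - q) * expect G p (\<lambda>S. indicator A S * h (\<lambda>b. S \<in> F b)) = (1 - q) * (a0 * g0)"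
    using IH0 by (cases "q = 1") auto
  moreover have "q * (1 - q) * ((a1 - a0) * (g1 - g0)) = 0"
    using cross by (cases "q = 0 \<or> q = 1 \<or> a1 = a0") auto
  ultimately have "q * expect G p (\<lambda>S. indicator (slice x A) S * h (\<lambda>b. S \<in> F1 b))
      + (1 - q) * expect G p (\<lambda>S. indicator A S * h (\<lambda>b. S \<in> F b))
      = (q * a1 + (1 - q) * a0) * (q * g1 + (1 - q) * g0)"
    unfolding mixture_product_eq by linarith
  then show ?case
    unfolding a1_def a0_def g1_def g0_def q_def F1_def Pr_insert[OF insert.hyps] expect_insert[OF insert.hyps]
    by (simp add: slice_def indicator_def)
qed

lemma le_one_plus_choose_two: "n \<le> 1 + (n choose 2)"
proof (cases n)
  case (Suc k)
  have "Suc k choose 2 = k + (k choose 2)" by (simp add: numeral_2_eq_2)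
  then show ?thesis using Suc by simp
qed simp

lemma indicator_UN_ge_Bonferroni:
  assumes "finite J"
  shows "(\<Sum>j\<in>J. indicator (B j) S) - (\<Sum>Q\<in>{Q. Q \<subseteq> J \<and> card Q = 2}. indicator (\<Inter>j\<in>Q. B j) S)
    \<le> (indicator (\<Union>j\<in>J. B j) S :: real)"
proof -
  define M where "M = J \<inter> {j. S \<in> B j}"
  have "finite M" using assms unfolding M_def by simp
  have "(\<Sum>j\<in>J. indicator (B j) S) = real (card M)"
    unfolding M_def indicator_def using assms by (simp add: sum.inter_filter[symmetric])
  moreover have "{Q. Q \<subseteq> J \<and> card Q = 2} \<inter> {Q. \<forall>j\<in>Q. S \<in> B j} = {Q. Q \<subseteq> M \<and> card Q = 2}"
    unfolding M_def by auto
  then have "(\<Sum>Q\<in>{Q. Q \<subseteq> J \<and> card Q = 2}. indicator (\<Inter>j\<in>Q. B j) S) = real (card M choose 2)"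
    unfolding indicator_def using assms n_subsets[OF \<open>finite M\<close>, of 2]
    by (simp add: sum.inter_filter[symmetric])
  moreover have "indicator (\<Union>j\<in>J. B j) S = (if M = {} then 0 else 1 :: real)"
    unfolding M_def indicator_def by auto
  ultimately show ?thesis
    using le_one_plus_choose_two[of "card M"] \<open>finite M\<close> by (auto simp flip: of_nat_add)
qed

lemma one_minus_mult_exp_le:
  fixes l x y z :: real
  assumes "0 \<le> l" and "x \<le> y + z"
  shows "(1 - l * y) * exp (- l * z) \<le> exp (- l * x)"
proof -
  have "(1 - l * y) * exp (- l * z) \<le> exp (- l * y) * exp (- l * z)"
    using exp_ge_add_one_self[of "- l * y"] by (intro mult_right_mono) auto
  also have "\<dots> = exp (- l * (y + z))" by (simp add: exp_add[symmetric] algebra_simps)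
  also have "\<dots> \<le> exp (- l * x)" using mult_left_mono[OF assms(2,1)] by simp
  finally show ?thesis .
qed

lemma le_exp_quadratic_if_deriv_le:
  fixes f f' :: "real \<Rightarrow> real"
  assumes "0 \<le> l"
    and deriv: "\<And>x. 0 \<le> x \<Longrightarrow> x \<le> l \<Longrightarrow> (f has_real_derivative f' x) (at x)"
    and bound: "\<And>x. 0 \<le> x \<Longrightarrow> x \<le> l \<Longrightarrow> f' x \<le> - f x * (c - x * D)"
  shows "f l \<le> f 0 * exp (- (l * c) + l\<^sup>2 * D / 2)"
proof -
  define g where "g x = f x * exp (x * c - x\<^sup>2 * D / 2)" for x
  have "g l \<le> g 0"
  proof (rule DERIV_nonpos_imp_nonincreasing[OF assms(1)])
    fix x assume x: "0 \<le> x" "x \<le> l"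
    define E where "E = exp (x * c - x\<^sup>2 * D / 2)"
    have "(g has_real_derivative f' x * E + f x * (E * (c - x * D))) (at x)"
      unfolding g_def E_def by (rule derivative_eq_intros deriv[OF x] refl | simp)+
    moreover have "f' x * E + f x * (E * (c - x * D)) \<le> 0"
      using mult_right_mono[OF bound[OF x], of E] by (simp add: E_def algebra_simps)
    ultimately show "\<exists>y. (g has_real_derivative y) (at x) \<and> y \<le> 0" by blast
  qed
  define a where "a = l * c - l\<^sup>2 * D / 2"
  have "f l = g l * exp (- a)"
    unfolding g_def a_def by (simp add: mult.assoc flip: exp_add)
  also have "\<dots> \<le> g 0 * exp (- a)"
    using \<open>g l \<le> g 0\<close> by simp
  finally show ?thesis
    unfolding g_def a_def by simp
qed

lemma expect_exp_has_real_derivative: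
  "((\<lambda>l. expect G p (\<lambda>S. exp (- l * X S))) has_real_derivative
     - expect G p (\<lambda>S. X S * exp (- x * X S))) (at x)"
proof -
  have "((\<lambda>l. \<Sum>S\<in>Pow G. wt G p S * exp (- l * X S)) has_real_derivative
        (\<Sum>S\<in>Pow G. wt G p S * (exp (- x * X S) * (- X S)))) (at x)"
    by (intro DERIV_sum DERIV_cmult) (auto intro!: derivative_eq_intros)
  then show ?thesis
    unfolding expect_def by (simp add: sum_negf[symmetric] algebra_simps)
qed

lemma Pr_lower_tail_le_exp_moment:
  assumes "finite G" "prob_params G p" "0 \<le> l"
  shows "Pr G p {S\<in>Pow G. X S \<le> m} \<le> exp (l * m) * expect G p (\<lambda>S. exp (- l * X S))"
proof -
  have "indicator {S\<in>Pow G. X S \<le> m} S \<le> exp (l * m) * exp (- l * X S)" for S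
  proof (cases "X S \<le> m")
    case True
    then have "1 \<le> exp (l * (m - X S))" using assms(3) by simp
    moreover have "exp (l * m) * exp (- l * X S) = exp (l * (m - X S))"
      by (simp add: exp_add[symmetric] algebra_simps)
    ultimately show ?thesis by (simp add: indicator_def)
  qed (simp add: indicator_def)
  then show ?thesis
    unfolding Pr_eq_expect[OF assms(1)] expect_cmult[symmetric] by (intro expect_mono assms(2))
qed

lemma mono_on_sum_indicator:
  "(\<And>k. k \<in> K \<Longrightarrow> upward_closed G (A k)) \<Longrightarrow> mono_on (Pow G) (\<lambda>S. \<Sum>k\<in>K. indicator (A k) S :: real)"
  using mono_on_indicator unfolding monotone_on_def by (blast intro: sum_mono)

lemma antimono_on_exp_neg:
  "mono_on A f \<Longrightarrow> 0 \<le> l \<Longrightarrow> antimono_on A (\<lambda>S. exp (- l * f S :: real))"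
  unfolding monotone_on_def by (simp add: mult_left_mono)

lemma indep_ev_sym: "indep_ev G p A C \<longleftrightarrow> indep_ev G p C A"
  unfolding indep_ev_def by (simp add: Int_commute mult.commute)

locale janson =
  fixes Gamma :: "'a set" and p :: "'a \<Rightarrow> real"
    and Idx :: "('i \<times> 'j) set" and B :: "'i \<times> 'j \<Rightarrow> 'a set set"
  assumes finite_Gamma: "finite Gamma" and probs: "prob_params Gamma p"
    and finite_Idx: "finite Idx" and upward_B: "\<And>a. a \<in> Idx \<Longrightarrow> upward_closed Gamma (B a)"
begin

definition "Is = fst ` Idx"
definition "Js i = {j. (i, j) \<in> Idx}"
definition "Bu i = (\<Union>j\<in>Js i. B (i, j))"
definition "X S = (\<Sum>i\<in>Is. indicator (Bu i) S :: real)"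
definition "Psi l = expect Gamma p (\<lambda>S. exp (- l * X S))"

definition "dep_union a k = (\<Union>l\<in>{l. (k, l) \<in> Idx \<and> dep Gamma p B (k, l) a}. B (k, l))"
definition "indep_union a k = (\<Union>l\<in>{l. (k, l) \<in> Idx \<and> \<not> dep Gamma p B (k, l) a}. B (k, l))"
definition "Xdep a S = (\<Sum>k\<in>Is. indicator (dep_union a k) S :: real)"
definition "Xindep a S = (\<Sum>k\<in>Is. indicator (indep_union a k) S :: real)"

definition "theta a = (\<Sum>k\<in>Is. Pr Gamma p (B a \<inter> dep_union a k))"
definition "pairs i = {Q. Q \<subseteq> Js i \<and> card Q = 2}"

definition "mu = (\<Sum>a\<in>Idx. Pr Gamma p (B a))"
definition "Theta = (\<Sum>a\<in>Idx. theta a)"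
definition "gamma = (\<Sum>i\<in>Is. \<Sum>Q\<in>pairs i. Pr Gamma p (\<Inter>j\<in>Q. B (i, j)))"
definition "Delta = (\<Sum>a\<in>Idx. \<Sum>b\<in>Idx. if dep Gamma p B a b then Pr Gamma p (B a \<inter> B b) else 0)"

lemma finite_Is: "finite Is"
  unfolding Is_def using finite_Idx by simp

lemma finite_Js: "finite (Js i)"
proof -
  have "Js i \<subseteq> snd ` Idx" unfolding Js_def by force
  then show ?thesis using finite_Idx finite_subset by blast
qed

lemma sum_Is_Js: "(\<Sum>i\<in>Is. \<Sum>j\<in>Js i. f (i, j)) = (\<Sum>a\<in>Idx. f a)"
proof -
  have "(SIGMA i:Is. Js i) = Idx" unfolding Is_def Js_def by force
  then show ?thesis
    using sum.Sigma[OF finite_Is, of Js "\<lambda>i j. f (i, j)"] finite_Js by (simp add: case_prod_beta')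
qed

lemma upward_closed_Bu: "upward_closed Gamma (Bu i)"
  unfolding Bu_def Js_def by (rule upward_closed_UN) (auto intro: upward_B)

lemma upward_closed_dep_union: "upward_closed Gamma (dep_union a k)"
  unfolding dep_union_def by (rule upward_closed_UN) (auto intro: upward_B)

lemma upward_closed_indep_union: "upward_closed Gamma (indep_union a k)"
  unfolding indep_union_def by (rule upward_closed_UN) (auto intro: upward_B)

lemma X_eq_card: "X S = real (card {i\<in>Is. S \<in> Bu i})"
  unfolding X_def indicator_def using finite_Is by (simp add: Int_def)

lemma X_le_Xdep_plus_Xindep: "X S \<le> Xdep a S + Xindep a S"
proof -
  have "Bu k \<subseteq> dep_union a k \<union> indep_union a k" for k
    unfolding Bu_def Js_def dep_union_def indep_union_def by blast
  then have "indicator (Bu k) S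
      \<le> indicator (dep_union a k) S + (indicator (indep_union a k) S :: real)" for k
    unfolding indicator_def by auto
  then show ?thesis unfolding X_def Xdep_def Xindep_def by (simp add: sum.distrib[symmetric] sum_mono)
qed

lemma Xindep_le_X: "Xindep a S \<le> X S"
proof -
  have "indep_union a k \<subseteq> Bu k" for k
    unfolding Bu_def Js_def indep_union_def by blast
  then have "indicator (indep_union a k) S \<le> (indicator (Bu k) S :: real)" for k
    unfolding indicator_def by auto
  then show ?thesis unfolding X_def Xindep_def by (simp add: sum_mono)
qed

lemma expect_indicator_mult_exp_Xindep:
  assumes "a \<in> Idx"
  shows "expect Gamma p (\<lambda>S. indicator (B a) S * exp (- l * Xindep a S))
       = Pr Gamma p (B a) * expect Gamma p (\<lambda>S. exp (- l * Xindep a S))"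
proof -
  \<comment> \<open>Xindep a is a function of the indicators of the family F, whose members are increasing and
    independent of B a (excluded indices carry the empty event).\<close>
  define F where "F b = (if b \<in> Idx \<and> \<not> dep Gamma p B b a then B b else {})" for b
  define h where "h M = exp (- l * (\<Sum>k\<in>Is. of_bool (\<exists>j\<in>Js k. M (k, j))))"
    for M :: "'i \<times> 'j \<Rightarrow> bool"
  have Xindep_eq: "exp (- l * Xindep a S) = h (\<lambda>b. S \<in> F b)" for S
    unfolding h_def Xindep_def indep_union_def F_def Js_def indicator_def by (auto intro!: sum.cong)
  have "upward_closed Gamma (F b)" for b
    unfolding F_def using upward_B by (auto simp: upward_closed_def)
  moreover have "indep_ev Gamma p (B a) (F b)" for b
    unfolding F_def dep_def by (auto simp: indep_ev_sym indep_ev_def Pr_def)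
  ultimately show ?thesis
    unfolding Xindep_eq
    by (intro indep_ev_upward_family finite_Gamma probs upward_B[OF assms])
qed

lemma expect_indicator_Xdep: "expect Gamma p (\<lambda>S. indicator (B a) S * Xdep a S) = theta a"
  unfolding Xdep_def theta_def sum_distrib_left expect_sum
  by (simp add: Pr_eq_expect[OF finite_Gamma] indicator_inter_arith[abs_def])

lemma expect_indicator_Xdep_exp_Xindep_le:
  assumes "a \<in> Idx" "0 \<le> l"
  shows "expect Gamma p (\<lambda>S. indicator (B a) S * Xdep a S * exp (- l * Xindep a S))
       \<le> theta a * expect Gamma p (\<lambda>S. exp (- l * Xindep a S))"
proof -
  have "mono_on (Pow Gamma) (Xdep a)"
    unfolding Xdep_def by (intro mono_on_sum_indicator upward_closed_dep_union)
  moreover have "0 \<le> Xdep a S" for S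
    unfolding Xdep_def by (simp add: sum_nonneg)
  ultimately have mono: "mono_on (Pow Gamma) (\<lambda>S. indicator (B a) S * Xdep a S)"
    using mono_on_indicator[OF upward_B[OF assms(1)]]
    unfolding monotone_on_def by (simp add: mult_mono)
  have anti: "antimono_on (Pow Gamma) (\<lambda>S. exp (- l * Xindep a S))"
    unfolding Xindep_def
    by (intro antimono_on_exp_neg mono_on_sum_indicator upward_closed_indep_union assms(2))
  show ?thesis
    using harris_inequality[OF finite_Gamma probs mono anti] by (simp add: expect_indicator_Xdep)
qed

lemma expect_indicator_exp_X_ge:
  assumes "a \<in> Idx" "0 \<le> l"
  shows "Psi l * (Pr Gamma p (B a) - l * theta a)
       \<le> expect Gamma p (\<lambda>S. indicator (B a) S * exp (- l * X S))"
proof -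
  define E where "E = expect Gamma p (\<lambda>S. exp (- l * Xindep a S))"
  have "indicator (B a) S * exp (- l * Xindep a S)
        - l * (indicator (B a) S * Xdep a S * exp (- l * Xindep a S))
      \<le> indicator (B a) S * exp (- l * X S)" for S
    using mult_left_mono[OF one_minus_mult_exp_le[OF assms(2) X_le_Xdep_plus_Xindep],
        of "indicator (B a) S"]
    by (simp add: algebra_simps)
  then have "expect Gamma p (\<lambda>S. indicator (B a) S * exp (- l * Xindep a S))
      - l * expect Gamma p (\<lambda>S. indicator (B a) S * Xdep a S * exp (- l * Xindep a S))
      \<le> expect Gamma p (\<lambda>S. indicator (B a) S * exp (- l * X S))"
    using expect_mono[OF probs] by (simp flip: expect_cmult expect_diff)
  then have main: "E * (Pr Gamma p (B a) - l * theta a)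
      \<le> expect Gamma p (\<lambda>S. indicator (B a) S * exp (- l * X S))"
    using expect_indicator_mult_exp_Xindep[OF assms(1)]
      mult_left_mono[OF expect_indicator_Xdep_exp_Xindep_le[OF assms] assms(2)]
    unfolding E_def by (simp add: algebra_simps)
  have "Psi l \<le> E"
    unfolding Psi_def E_def using Xindep_le_X assms(2)
    by (intro expect_mono probs) (simp add: mult_left_mono)
  moreover have "0 \<le> Psi l" "0 \<le> expect Gamma p (\<lambda>S. indicator (B a) S * exp (- l * X S))"
    unfolding Psi_def by (auto intro!: expect_nonneg probs)
  ultimately show ?thesis
  proof (cases "0 \<le> Pr Gamma p (B a) - l * theta a")
    case True
    then show ?thesis using main mult_right_mono[OF \<open>Psi l \<le> E\<close> True] by linarith
  next
    case False
    then have "Psi l * (Pr Gamma p (B a) - l * theta a) \<le> 0"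
      using \<open>0 \<le> Psi l\<close> by (simp add: mult_nonneg_nonpos)
    then show ?thesis using \<open>0 \<le> expect _ _ _\<close> by linarith
  qed
qed

lemma mono_on_X: "mono_on (Pow Gamma) X"
  unfolding X_def by (intro mono_on_sum_indicator upward_closed_Bu)

lemma expect_indicator_Bu_exp_X_ge:
  assumes "0 \<le> l"
  shows "(\<Sum>j\<in>Js i. Psi l * (Pr Gamma p (B (i, j)) - l * theta (i, j)))
           - Psi l * (\<Sum>Q\<in>pairs i. Pr Gamma p (\<Inter>j\<in>Q. B (i, j)))
       \<le> expect Gamma p (\<lambda>S. indicator (Bu i) S * exp (- l * X S))"
proof -
  define e where "e S = exp (- l * X S)" for S
  have "(\<Sum>j\<in>Js i. indicator (B (i, j)) S * e S)
      - (\<Sum>Q\<in>pairs i. indicator (\<Inter>j\<in>Q. B (i, j)) S * e S)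
      \<le> indicator (Bu i) S * e S" for S
    using mult_right_mono[OF indicator_UN_ge_Bonferroni[OF finite_Js, of "\<lambda>j. B (i, j)"], of "e S"]
    unfolding Bu_def pairs_def e_def by (simp add: left_diff_distrib sum_distrib_right)
  then have "(\<Sum>j\<in>Js i. expect Gamma p (\<lambda>S. indicator (B (i, j)) S * e S))
      - (\<Sum>Q\<in>pairs i. expect Gamma p (\<lambda>S. indicator (\<Inter>j\<in>Q. B (i, j)) S * e S))
      \<le> expect Gamma p (\<lambda>S. indicator (Bu i) S * e S)"
    unfolding expect_sum[symmetric] expect_diff[symmetric] by (intro expect_mono probs)
  moreover have "(\<Sum>j\<in>Js i. Psi l * (Pr Gamma p (B (i, j)) - l * theta (i, j)))
      \<le> (\<Sum>j\<in>Js i. expect Gamma p (\<lambda>S. indicator (B (i, j)) S * e S))"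
    unfolding e_def by (intro sum_mono expect_indicator_exp_X_ge assms) (simp add: Js_def)
  moreover have "expect Gamma p (\<lambda>S. indicator (\<Inter>j\<in>Q. B (i, j)) S * e S)
      \<le> Pr Gamma p (\<Inter>j\<in>Q. B (i, j)) * Psi l" if "Q \<in> pairs i" for Q
  proof -
    have "upward_closed Gamma (\<Inter>j\<in>Q. B (i, j))"
      using that by (intro upward_closed_INT upward_B) (auto simp: pairs_def Js_def)
    then show ?thesis
      using harris_inequality[OF finite_Gamma probs mono_on_indicator
          antimono_on_exp_neg[OF mono_on_X assms]]
      unfolding e_def Psi_def Pr_eq_expect[OF finite_Gamma] by simp
  qed
  then have "(\<Sum>Q\<in>pairs i. expect Gamma p (\<lambda>S. indicator (\<Inter>j\<in>Q. B (i, j)) S * e S))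
      \<le> Psi l * (\<Sum>Q\<in>pairs i. Pr Gamma p (\<Inter>j\<in>Q. B (i, j)))"
    by (simp add: sum_distrib_left mult.commute sum_mono)
  ultimately show ?thesis unfolding e_def by linarith
qed

lemma expect_X_exp_X_ge:
  assumes "0 \<le> l"
  shows "Psi l * (mu - gamma - l * Theta) \<le> expect Gamma p (\<lambda>S. X S * exp (- l * X S))"
proof -
  have "Psi l * (mu - gamma - l * Theta)
      = (\<Sum>i\<in>Is. (\<Sum>j\<in>Js i. Psi l * (Pr Gamma p (B (i, j)) - l * theta (i, j)))
           - Psi l * (\<Sum>Q\<in>pairs i. Pr Gamma p (\<Inter>j\<in>Q. B (i, j))))"
    unfolding sum_subtractf sum_Is_Js[of "\<lambda>a. Psi l * (Pr Gamma p (B a) - l * theta a)"]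
      mu_def gamma_def Theta_def
    by (simp add: sum_distrib_left sum_subtractf right_diff_distrib)
  also have "\<dots> \<le> (\<Sum>i\<in>Is. expect Gamma p (\<lambda>S. indicator (Bu i) S * exp (- l * X S)))"
    by (intro sum_mono expect_indicator_Bu_exp_X_ge assms)
  also have "\<dots> = expect Gamma p (\<lambda>S. X S * exp (- l * X S))"
    unfolding X_def sum_distrib_right expect_sum ..
  finally show ?thesis .
qed

lemma Psi_le_exp:
  assumes "0 \<le> l"
  shows "Psi l \<le> exp (- (l * (mu - gamma)) + l\<^sup>2 * Theta / 2)"
proof -
  have "Psi l \<le> Psi 0 * exp (- (l * (mu - gamma)) + l\<^sup>2 * Theta / 2)"
  proof (rule le_exp_quadratic_if_deriv_le[OF assms])
    fix x :: real assume "0 \<le> x"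
    show "(Psi has_real_derivative - expect Gamma p (\<lambda>S. X S * exp (- x * X S))) (at x)"
      unfolding Psi_def[abs_def] by (rule expect_exp_has_real_derivative)
    show "- expect Gamma p (\<lambda>S. X S * exp (- x * X S)) \<le> - Psi x * (mu - gamma - x * Theta)"
      using expect_X_exp_X_ge[OF \<open>0 \<le> x\<close>] by simp
  qed
  moreover have "Psi 0 = 1"
    unfolding Psi_def by (simp add: expect_const[OF finite_Gamma])
  ultimately show ?thesis by simp
qed

lemma Pr_le_theta: "a \<in> Idx \<Longrightarrow> Pr Gamma p (B a) \<le> theta a"
proof -
  assume a: "a \<in> Idx"
  have "B a \<subseteq> dep_union a (fst a)"
    unfolding dep_union_def dep_def using a by (cases a) auto
  then have "Pr Gamma p (B a) = Pr Gamma p (B a \<inter> dep_union a (fst a))"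
    by (simp add: Int_absorb2)
  also have "\<dots> \<le> theta a"
    unfolding theta_def using a finite_Is Pr_nonneg[OF finite_Gamma probs]
    by (intro member_le_sum) (auto simp: Is_def)
  finally show ?thesis .
qed

lemma mu_le_Theta: "mu \<le> Theta"
  unfolding mu_def Theta_def by (intro sum_mono Pr_le_theta)

lemma theta_le: "theta a \<le> (\<Sum>b\<in>Idx. if dep Gamma p B a b then Pr Gamma p (B a \<inter> B b) else 0)"
proof -
  define f where "f b = (if dep Gamma p B a b then Pr Gamma p (B a \<inter> B b) else 0)" for b
  have "Pr Gamma p (B a \<inter> dep_union a k) \<le> (\<Sum>l\<in>Js k. f (k, l))" for k
  proof -
    define g where "g l = (if dep Gamma p B a (k, l) then B a \<inter> B (k, l) else {})" for l
    have "B a \<inter> dep_union a k = (\<Union>l\<in>Js k. g l)"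
      unfolding dep_union_def g_def Js_def by (auto simp: dep_def indep_ev_sym)
    then have "Pr Gamma p (B a \<inter> dep_union a k) \<le> (\<Sum>l\<in>Js k. Pr Gamma p (g l))"
      using Pr_UN_le[OF finite_Gamma probs finite_Js] by simp
    also have "\<dots> = (\<Sum>l\<in>Js k. f (k, l))"
      unfolding f_def g_def by (intro sum.cong) (auto simp: Pr_def)
    finally show ?thesis .
  qed
  then have "theta a \<le> (\<Sum>k\<in>Is. \<Sum>l\<in>Js k. f (k, l))"
    unfolding theta_def by (rule sum_mono)
  also have "\<dots> = (\<Sum>b\<in>Idx. f b)"
    by (rule sum_Is_Js)
  finally show ?thesis unfolding f_def .
qed

lemma Theta_le_Delta: "Theta \<le> Delta"
  unfolding Theta_def Delta_def by (intro sum_mono theta_le)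

lemma lower_tail_bound:
  assumes "0 < mu" "gamma \<le> t"
  shows "Pr Gamma p {S\<in>Pow Gamma. X S \<le> mu - t} \<le> exp (- ((t - gamma)\<^sup>2 / (2 * Theta)))"
proof -
  have "0 < Theta" using assms(1) mu_le_Theta by linarith
  define l where "l = (t - gamma) / Theta"
  have "0 \<le> l" unfolding l_def using assms(2) \<open>0 < Theta\<close> by simp
  have "Pr Gamma p {S\<in>Pow Gamma. X S \<le> mu - t} \<le> exp (l * (mu - t)) * Psi l"
    unfolding Psi_def by (rule Pr_lower_tail_le_exp_moment[OF finite_Gamma probs \<open>0 \<le> l\<close>])
  also have "\<dots> \<le> exp (l * (mu - t)) * exp (- (l * (mu - gamma)) + l\<^sup>2 * Theta / 2)"
    by (intro mult_left_mono Psi_le_exp \<open>0 \<le> l\<close>) simp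
  also have "\<dots> = exp (- ((t - gamma)\<^sup>2 / (2 * Theta)))"
    unfolding l_def using \<open>0 < Theta\<close>
    by (simp add: field_simps power2_eq_square flip: exp_add)
  finally show ?thesis .
qed

end

theorem mainTheorem4:
  fixes Gamma :: "'a set" and p :: "'a \<Rightarrow> real"
    and Idx :: "('i \<times> 'j) set" and B :: "'i \<times> 'j \<Rightarrow> 'a set set"
    and t :: real
  assumes "finite Gamma"
    and "\<forall>x\<in>Gamma. 0 \<le> p x \<and> p x \<le> 1"
    and "finite Idx"
    and "\<forall>a\<in>Idx. increasing_event Gamma (B a)"
    and "(\<Sum>a\<in>Idx. Pr Gamma p (B a)) > 0"
    and "(\<Sum>i\<in>fst ` Idx. \<Sum>Q\<in>{Q. Q \<subseteq> {j. (i, j) \<in> Idx} \<and> card Q = 2}.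
            Pr Gamma p (\<Inter>j\<in>Q. B (i, j))) \<le> t"
    and "t \<le> (\<Sum>a\<in>Idx. Pr Gamma p (B a))"
  shows
    "let Bi = (\<lambda>i. \<Union>j\<in>{j. (i, j) \<in> Idx}. B (i, j));
         X = (\<lambda>S. real (card {i\<in>fst ` Idx. S \<in> Bi i}));
         \<mu> = (\<Sum>a\<in>Idx. Pr Gamma p (B a));
         Theta = (\<Sum>a\<in>Idx. \<Sum>k\<in>fst ` Idx.
                    Pr Gamma p (B a \<inter> (\<Union>l\<in>{l. (k, l) \<in> Idx \<and> dep Gamma p B (k, l) a}. B (k, l))));
         Delta = (\<Sum>a\<in>Idx. \<Sum>b\<in>Idx. if dep Gamma p B a b then Pr Gamma p (B a \<inter> B b) else 0);
         \<gamma> = (\<Sum>i\<in>fst ` Idx. \<Sum>Q\<in>{Q. Q \<subseteq> {j. (i, j) \<in> Idx} \<and> card Q = 2}.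
                    Pr Gamma p (\<Inter>j\<in>Q. B (i, j)))
     in Pr Gamma p {S\<in>Pow Gamma. X S \<le> \<mu> - t} \<le> exp (- ((t - \<gamma>)\<^sup>2 / (2 * Theta)))
        \<and> exp (- ((t - \<gamma>)\<^sup>2 / (2 * Theta))) \<le> exp (- ((t - \<gamma>)\<^sup>2 / (2 * Delta)))"
proof -
  interpret J: janson Gamma p Idx B
    using assms(1-4) by unfold_locales (auto simp: prob_params_def upward_closed_increasing_event)
  have mu: "J.mu = (\<Sum>a\<in>Idx. Pr Gamma p (B a))" and gamma: "J.gamma = (\<Sum>i\<in>fst ` Idx.
      \<Sum>Q\<in>{Q. Q \<subseteq> {j. (i, j) \<in> Idx} \<and> card Q = 2}. Pr Gamma p (\<Inter>j\<in>Q. B (i, j)))"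
    unfolding J.mu_def J.gamma_def J.pairs_def J.Js_def J.Is_def by simp_all
  have "0 < J.Theta" using assms(5) J.mu_le_Theta unfolding mu by linarith
  then have "(t - J.gamma)\<^sup>2 / (2 * J.Delta) \<le> (t - J.gamma)\<^sup>2 / (2 * J.Theta)"
    using J.Theta_le_Delta by (intro divide_left_mono) auto
  with J.lower_tail_bound[of t] assms(5,6) show ?thesis
    unfolding Let_def J.X_eq_card mu[symmetric] gamma[symmetric]
    unfolding J.Theta_def J.theta_def J.dep_union_def J.Delta_def J.Bu_def J.Js_def J.Is_def
    by simp
qed

end
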